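(* $\mathfrak{cp}((\mathcal{P}(\omega)/\mathrm{fin})^-)=\mathfrak{r}$.
   Context: $\mathcal{P}(\omega)/\mathrm{fin}$ is the Boolean algebra of subsets of $\omega$ modulo finite sets; for a Boolean algebra $B$, $B^-=B\setminus\{0,1\}$ ordered by the Boolean order. For a poset $(P,\le)$, $F\subseteq P$ is a comparable family if for every $p\in P$ there is $q\in F$ with $p\le q$ or $q\le p$; $\mathfrak{cp}(P)$ is the minimal size of a comparable family. $\mathfrak{r}$ is the reaping number: the minimal size of a family $\mathcal{R}\subseteq[\omega]^\omega$ such that no single $X\subseteq\omega$ splits every member of $\mathcal{R}$ (i.e., for every $X$ there is $R\in\mathcal{R}$ with $R\subseteq^* X$ or $R\subseteq^*\omega\setminus X$). *)

theory Defs
  imports Main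
begin

definition almost_eq :: "(nat set \<times> nat set) set" where
  "almost_eq = {(A, B). finite ((A - B) \<union> (B - A))}"

definition Pfin :: "nat set set set" where
  "Pfin = (UNIV :: nat set set) // almost_eq"

definition fin_le :: "nat set set \<Rightarrow> nat set set \<Rightarrow> bool" where
  "fin_le X Y \<longleftrightarrow> (\<exists>A\<in>X. \<exists>B\<in>Y. finite (A - B))"

text \<open>B^- = B without 0 = [{}] and 1 = [omega].\<close>
definition Pfin_minus :: "nat set set set" where
  "Pfin_minus = Pfin - {almost_eq `` {{}}, almost_eq `` {UNIV}}"

definition comparable_family :: "'a set \<Rightarrow> ('a \<Rightarrow> 'a \<Rightarrow> bool) \<Rightarrow> 'a set \<Rightarrow> bool" where
  "comparable_family P le F \<longleftrightarrow> F \<subseteq> P \<and> (\<forall>p\<in>P. \<exists>q\<in>F. le p q \<or> le q p)"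

definition reaping_family :: "nat set set \<Rightarrow> bool" where
  "reaping_family R \<longleftrightarrow> (\<forall>S\<in>R. infinite S) \<and>
     (\<forall>X :: nat set. \<exists>S\<in>R. finite (S - X) \<or> finite (S - (UNIV - X)))"

end

theory Submission
  imports Defs "HOL-Library.Infinite_Set"
begin

text \<open>A comparable family F in (P(omega)/fin)^- yields a reaping family: representatives of the
members of F together with their complements. Conversely, if R is reaping, split every S in R into
an infinite-coinfinite part T \<subseteq> S; the classes of the sets T and of their complements form a
comparable family, because S \<subseteq>* X forces [T] \<le> [X] and S \<subseteq>* -X forces [X] \<le> [-T].
Both constructions double the size of the family, which is harmless as no finite family is
reaping: finitely many infinite sets can be split simultaneously by a single X.\<close>

lemma finite_family_hits_interval_above:
  fixes F :: "nat set set"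
  assumes "finite F" and "\<forall>S\<in>F. infinite S"
  shows "\<exists>m'>m. \<forall>S\<in>F. \<exists>n\<in>S. m \<le> n \<and> n < m'"
  using assms
proof (induction F rule: finite_induct)
  case empty
  show ?case
    using lessI by blast
next
  case (insert S F)
  then obtain m' where m': "m' > m" "\<forall>S\<in>F. \<exists>n\<in>S. m \<le> n \<and> n < m'"
    by blast
  have "infinite S"
    using insert.prems by blast
  then obtain n where "n \<in> S" "m \<le> n"
    unfolding infinite_nat_iff_unbounded_le by blast
  have "\<exists>k\<in>T. m \<le> k \<and> k < max m' (Suc n)" if "T \<in> insert S F" for T
    using that m'(2) \<open>n \<in> S\<close> \<open>m \<le> n\<close> by (fastforce simp: less_max_iff_disj)
  moreover have "m < max m' (Suc n)"
    using m'(1) by simp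
  ultimately show ?case
    by blast
qed

lemma finite_family_hits_all_intervals:
  fixes F :: "nat set set"
  assumes "finite F" and "\<forall>S\<in>F. infinite S"
  obtains a :: "nat \<Rightarrow> nat" where "strict_mono a"
    and "\<And>S k. S \<in> F \<Longrightarrow> \<exists>n\<in>S. a k \<le> n \<and> n < a (Suc k)"
proof -
  obtain next_bound :: "nat \<Rightarrow> nat"
    where nb: "\<And>m. next_bound m > m \<and> (\<forall>S\<in>F. \<exists>n\<in>S. m \<le> n \<and> n < next_bound m)"
    using finite_family_hits_interval_above[OF assms] by metis
  define a where "a k = (next_bound ^^ k) 0" for k
  have a_Suc: "a (Suc k) = next_bound (a k)" for k
    by (simp add: a_def)
  have "strict_mono a"
    by (simp add: strict_mono_Suc_iff a_Suc nb)
  moreover have "\<exists>n\<in>S. a k \<le> n \<and> n < a (Suc k)" if "S \<in> F" for S k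
    using nb that by (simp add: a_Suc)
  ultimately show thesis
    using that by blast
qed

lemma strict_mono_interval_unique:
  fixes a :: "nat \<Rightarrow> nat"
  assumes "strict_mono a"
    and "n \<in> {a k..<a (Suc k)}" and "n \<in> {a j..<a (Suc j)}"
  shows "k = j"
proof (rule ccontr)
  have le: "a (Suc i) \<le> a l" if "i < l" for i l
    using that strict_mono_less_eq[OF assms(1)] by (simp add: Suc_le_eq)
  assume "k \<noteq> j"
  then consider "k < j" | "j < k"
    by linarith
  then show False
    by cases (use le assms(2,3) in fastforce)+
qed

lemma infinite_inter_intervals:
  fixes a :: "nat \<Rightarrow> nat" and K :: "nat set"
  assumes "strict_mono a" and hits: "\<And>k. \<exists>n\<in>S. a k \<le> n \<and> n < a (Suc k)"
    and "infinite K"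
  shows "infinite (S \<inter> (\<Union>k\<in>K. {a k..<a (Suc k)}))"
  unfolding infinite_nat_iff_unbounded_le
proof
  fix m
  obtain k where k: "k \<in> K" "m \<le> k"
    using \<open>infinite K\<close> unfolding infinite_nat_iff_unbounded_le by blast
  obtain n where n: "n \<in> S" "a k \<le> n" "n < a (Suc k)"
    using hits by blast
  have "k \<le> a k"
    using \<open>strict_mono a\<close> by (rule strict_mono_imp_increasing)
  with k n have "m \<le> n" and "n \<in> S \<inter> (\<Union>k\<in>K. {a k..<a (Suc k)})"
    by auto
  then show "\<exists>n\<ge>m. n \<in> S \<inter> (\<Union>k\<in>K. {a k..<a (Suc k)})"
    by blast
qed

lemma finite_family_splitter:
  fixes F :: "nat set set"
  assumes "finite F" and "\<forall>S\<in>F. infinite S"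
  shows "\<exists>X. \<forall>S\<in>F. infinite (S \<inter> X) \<and> infinite (S - X)"
proof -
  obtain a where a: "strict_mono a"
    and hits: "\<And>S k. S \<in> F \<Longrightarrow> \<exists>n\<in>S. a k \<le> n \<and> n < a (Suc k)"
    using finite_family_hits_all_intervals[OF assms] by blast
  define X where "X = (\<Union>k\<in>{k. even k}. {a k..<a (Suc k)})"
  define Y where "Y = (\<Union>k\<in>{k. odd k}. {a k..<a (Suc k)})"
  have "\<exists>n\<ge>m. even n" and "\<exists>n\<ge>m. odd n" for m :: nat
    by (rule exI[of _ "2 * m"], simp) (rule exI[of _ "2 * m + 1"], simp)
  then have "infinite {k::nat. even k}" and "infinite {k::nat. odd k}"
    unfolding infinite_nat_iff_unbounded_le by auto
  have "X \<inter> Y = {}"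
    unfolding X_def Y_def using strict_mono_interval_unique[OF a] by blast
  have "infinite (S \<inter> X) \<and> infinite (S - X)" if "S \<in> F" for S
  proof
    show "infinite (S \<inter> X)"
      unfolding X_def
      by (rule infinite_inter_intervals[OF a hits[OF that]]) fact
    have "infinite (S \<inter> Y)"
      unfolding Y_def
      by (rule infinite_inter_intervals[OF a hits[OF that]]) fact
    moreover have "S \<inter> Y \<subseteq> S - X"
      using \<open>X \<inter> Y = {}\<close> by blast
    ultimately show "infinite (S - X)"
      using finite_subset by blast
  qed
  then show ?thesis
    by blast
qed

lemma infinite_coinfinite_subset:
  fixes S :: "nat set"
  assumes "infinite S"
  obtains T where "T \<subseteq> S" and "infinite T" and "infinite (S - T)"
proof -
  obtain X where "infinite (S \<inter> X)" "infinite (S - X)"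
    using finite_family_splitter[of "{S}"] assms by auto
  moreover have "S - (S \<inter> X) = S - X"
    by blast
  ultimately show thesis
    using that[of "S \<inter> X"] by auto
qed

lemma reaping_family_infinite:
  assumes "reaping_family R"
  shows "infinite R"
proof
  assume "finite R"
  moreover have "\<forall>S\<in>R. infinite S"
    using assms unfolding reaping_family_def by blast
  ultimately obtain X where X: "\<forall>S\<in>R. infinite (S \<inter> X) \<and> infinite (S - X)"
    using finite_family_splitter by blast
  moreover have "S - (UNIV - X) = S \<inter> X" for S :: "nat set"
    by blast
  ultimately show False
    using assms unfolding reaping_family_def by auto
qed

lemma equiv_almost_eq: "equiv UNIV almost_eq"
proof (rule equivI)
  show "refl almost_eq"
    by (rule refl_onI) (auto simp: almost_eq_def)
  show "sym almost_eq"
    by (rule symI) (auto simp: almost_eq_def)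
  show "almost_eq \<subseteq> UNIV \<times> UNIV"
    by simp
  show "trans almost_eq"
  proof (rule transI)
    fix A B C
    assume "(A, B) \<in> almost_eq" and "(B, C) \<in> almost_eq"
    moreover have "(A - C) \<union> (C - A) \<subseteq> ((A - B) \<union> (B - A)) \<union> ((B - C) \<union> (C - B))"
      by blast
    ultimately show "(A, C) \<in> almost_eq"
      unfolding almost_eq_def by (auto intro: finite_subset)
  qed
qed

lemma almost_eq_class_eq_iff:
  "almost_eq `` {A} = almost_eq `` {B} \<longleftrightarrow> finite (A - B) \<and> finite (B - A)"
  by (subst eq_equiv_class_iff[OF equiv_almost_eq]) (auto simp: almost_eq_def)

lemma Pfin_minus_elem:
  assumes "p \<in> Pfin_minus"
  obtains A where "p = almost_eq `` {A}"
  using assms unfolding Pfin_minus_def Pfin_def by (blast elim: quotientE)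

lemma class_in_Pfin_minus_iff:
  "almost_eq `` {X} \<in> Pfin_minus \<longleftrightarrow> infinite X \<and> infinite (UNIV - X)"
  unfolding Pfin_minus_def Pfin_def
  by (simp add: quotientI almost_eq_class_eq_iff)

lemma fin_le_class_iff: "fin_le (almost_eq `` {X}) (almost_eq `` {Y}) \<longleftrightarrow> finite (X - Y)"
proof
  assume "fin_le (almost_eq `` {X}) (almost_eq `` {Y})"
  then obtain X' Y' where "X' \<in> almost_eq `` {X}" "Y' \<in> almost_eq `` {Y}" "finite (X' - Y')"
    unfolding fin_le_def by blast
  moreover have "X - Y \<subseteq> (X - X') \<union> (X' - Y') \<union> (Y' - Y)"
    by blast
  ultimately show "finite (X - Y)"
    by (simp add: almost_eq_def finite_subset)
next
  assume "finite (X - Y)"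
  moreover have "X \<in> almost_eq `` {X}" and "Y \<in> almost_eq `` {Y}"
    by (simp_all add: almost_eq_def)
  ultimately show "fin_le (almost_eq `` {X}) (almost_eq `` {Y})"
    unfolding fin_le_def by blast
qed

lemma card_of_Un_images_ordLeq:
  assumes "infinite A"
  shows "(card_of (f ` A \<union> g ` A), card_of A) \<in> ordLeq"
  by (rule card_of_Un_ordLeq_infinite_Field)
    (use assms card_of_Card_order[of A] in \<open>auto simp: card_of_image Field_card_of\<close>)

lemma reaping_family_from_comparable_family:
  assumes "comparable_family Pfin_minus fin_le F"
  shows "\<exists>R. reaping_family R \<and> (card_of R, card_of F) \<in> ordLeq"
proof -
  have sub: "F \<subseteq> Pfin_minus" and cmp: "\<forall>p\<in>Pfin_minus. \<exists>q\<in>F. fin_le p q \<or> fin_le q p"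
    using assms unfolding comparable_family_def by auto
  have "\<exists>A. q = almost_eq `` {A}" if "q \<in> F" for q
    using sub that by (blast elim: Pfin_minus_elem)
  then obtain A where A: "\<And>q. q \<in> F \<Longrightarrow> q = almost_eq `` {A q}"
    by metis
  have A_inf: "infinite (A q) \<and> infinite (UNIV - A q)" if "q \<in> F" for q
  proof -
    have "almost_eq `` {A q} \<in> Pfin_minus"
      using A[OF that] sub that by auto
    then show ?thesis
      by (simp add: class_in_Pfin_minus_iff)
  qed
  obtain X0 :: "nat set" where "infinite X0" "infinite (UNIV - X0)"
    using infinite_coinfinite_subset[OF infinite_UNIV_nat] by blast
  then obtain q0 where q0: "q0 \<in> F"
    using cmp class_in_Pfin_minus_iff by blast
  define R where "R = A ` F \<union> (\<lambda>q. UNIV - A q) ` F"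
  have "\<exists>S\<in>R. finite (S - X) \<or> finite (S - (UNIV - X))" for X
  proof (cases "infinite X \<and> infinite (UNIV - X)")
    case True
    then have "almost_eq `` {X} \<in> Pfin_minus"
      by (simp add: class_in_Pfin_minus_iff)
    then obtain q where "q \<in> F"
      and "fin_le (almost_eq `` {X}) q \<or> fin_le q (almost_eq `` {X})"
      using cmp by blast
    moreover from this(1) have "q = almost_eq `` {A q}"
      by (rule A)
    ultimately have "finite (X - A q) \<or> finite (A q - X)"
      by (metis fin_le_class_iff)
    moreover have "A q \<in> R" and "UNIV - A q \<in> R"
      unfolding R_def using \<open>q \<in> F\<close> by blast+
    moreover have "(UNIV - A q) - (UNIV - X) = X - A q"
      by blast
    ultimately show ?thesis
      by metis
  next
    case False
    have "A q0 \<in> R"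
      unfolding R_def using q0 by blast
    moreover have "A q0 - (UNIV - X) \<subseteq> X" and "A q0 - X \<subseteq> UNIV - X"
      by blast+
    ultimately show ?thesis
      using False by (meson finite_subset)
  qed
  moreover have "\<forall>S\<in>R. infinite S"
    using A_inf unfolding R_def by auto
  ultimately have reaping: "reaping_family R"
    unfolding reaping_family_def by blast
  have "infinite F"
  proof
    assume "finite F"
    then have "finite R"
      unfolding R_def by simp
    with reaping_family_infinite[OF reaping] show False
      by blast
  qed
  then have "(card_of R, card_of F) \<in> ordLeq"
    unfolding R_def by (rule card_of_Un_images_ordLeq)
  with reaping show ?thesis
    by blast
qed

lemma comparable_family_from_reaping_family:
  assumes "reaping_family R"
  shows "\<exists>F. comparable_family Pfin_minus fin_le F \<and> (card_of F, card_of R) \<in> ordLeq"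
proof -
  have "\<exists>T\<subseteq>S. infinite T \<and> infinite (S - T)" if "S \<in> R" for S
  proof -
    have "infinite S"
      using assms that unfolding reaping_family_def by blast
    then obtain T where "T \<subseteq> S" "infinite T" "infinite (S - T)"
      by (rule infinite_coinfinite_subset)
    then show ?thesis
      by blast
  qed
  then obtain T where T: "\<And>S. S \<in> R \<Longrightarrow> T S \<subseteq> S \<and> infinite (T S) \<and> infinite (S - T S)"
    by metis
  define F where "F = (\<lambda>S. almost_eq `` {T S}) ` R \<union> (\<lambda>S. almost_eq `` {UNIV - T S}) ` R"
  have "almost_eq `` {T S} \<in> Pfin_minus \<and> almost_eq `` {UNIV - T S} \<in> Pfin_minus"
    if "S \<in> R" for S
  proof -
    have "infinite (T S)" and "infinite (UNIV - T S)"
      using T[OF that] finite_subset[of "S - T S" "UNIV - T S"] by blast+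
    moreover have "UNIV - (UNIV - T S) = T S"
      by blast
    ultimately show ?thesis
      by (simp add: class_in_Pfin_minus_iff)
  qed
  then have "F \<subseteq> Pfin_minus"
    unfolding F_def by blast
  moreover have "\<exists>q\<in>F. fin_le p q \<or> fin_le q p" if "p \<in> Pfin_minus" for p
  proof -
    from \<open>p \<in> Pfin_minus\<close> obtain X where X: "p = almost_eq `` {X}"
      by (rule Pfin_minus_elem)
    obtain S where S: "S \<in> R" "finite (S - X) \<or> finite (S - (UNIV - X))"
      using assms unfolding reaping_family_def by blast
    have "T S - X \<subseteq> S - X" and "X - (UNIV - T S) \<subseteq> S - (UNIV - X)"
      using T[OF S(1)] by blast+
    then consider "finite (T S - X)" | "finite (X - (UNIV - T S))"
      using S(2) finite_subset by blast
    then show ?thesis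
    proof cases
      case 1
      then have "fin_le (almost_eq `` {T S}) p"
        unfolding X by (simp add: fin_le_class_iff)
      moreover have "almost_eq `` {T S} \<in> F"
        unfolding F_def using S(1) by blast
      ultimately show ?thesis
        by blast
    next
      case 2
      then have "fin_le p (almost_eq `` {UNIV - T S})"
        unfolding X by (simp add: fin_le_class_iff)
      moreover have "almost_eq `` {UNIV - T S} \<in> F"
        unfolding F_def using S(1) by blast
      ultimately show ?thesis
        by blast
    qed
  qed
  moreover have "(card_of F, card_of R) \<in> ordLeq"
    unfolding F_def using reaping_family_infinite[OF assms] by (rule card_of_Un_images_ordLeq)
  ultimately show ?thesis
    unfolding comparable_family_def by blast
qed

theorem mainTheorem6:
  shows "(\<forall>F. comparable_family Pfin_minus fin_le F \<longrightarrow>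
            (\<exists>R. reaping_family R \<and> (card_of R, card_of F) \<in> ordLeq)) \<and>
         (\<forall>R. reaping_family R \<longrightarrow>
            (\<exists>F. comparable_family Pfin_minus fin_le F \<and> (card_of F, card_of R) \<in> ordLeq))"
  using reaping_family_from_comparable_family comparable_family_from_reaping_family by blast

end
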